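(* Let $X$ be a metrizable space. Then $X$ is $0$-dimensional and compact if and only if the set of all uniformly disconnected metrics in $\mathrm{Met}(X)$ is a dense $F_{\sigma}$ subset of $(\mathrm{Met}(X), \mathcal{D}_X)$.
   Context: For a metrizable space $X$, $\mathrm{Met}(X)$ denotes the set of all metrics on $X$ generating the given topology of $X$, and $\mathcal{D}_X(d,e)=\sup_{x,y\in X}|d(x,y)-e(x,y)|$ (a possibly $\infty$-valued metric on $\mathrm{Met}(X)$, which carries the induced topology). "$0$-dimensional" means covering dimension $0$. A metric space $(X,d)$ is uniformly disconnected if there exists $\delta\in(0,1)$ such that for every non-constant finite sequence $z_1,\dots,z_N$ in $X$ one has $\delta\, d(z_1,z_N)\le\max_{1\le i\le N-1} d(z_i,z_{i+1})$. A subset is $F_\sigma$ if it is a countable union of closed sets. *)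

theory Defs
  imports "HOL-Analysis.Analysis" "HOL-Library.Extended_Nonnegative_Real"
begin

text \<open>Covering dimension at most 0 (Cech-Lebesgue): every finite open cover has a finite
  open refinement of order 0, i.e. consisting of pairwise disjoint sets.\<close>
definition covering_dim_zero :: "'a topology \<Rightarrow> bool" where
  "covering_dim_zero X \<longleftrightarrow>
     (\<forall>\<U>. finite \<U> \<and> (\<forall>U\<in>\<U>. openin X U) \<and> \<Union>\<U> = topspace X \<longrightarrow>
        (\<exists>\<V>. finite \<V> \<and> (\<forall>V\<in>\<V>. openin X V) \<and> \<Union>\<V> = topspace X \<and>
             (\<forall>V\<in>\<V>. \<exists>U\<in>\<U>. V \<subseteq> U) \<and> pairwise disjnt \<V>))"

definition Met :: "'a topology \<Rightarrow> ('a \<Rightarrow> 'a \<Rightarrow> real) set" where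
  "Met X = {d. Metric_space (topspace X) d \<and> Metric_space.mtopology (topspace X) d = X}"

definition DX :: "'a topology \<Rightarrow> ('a \<Rightarrow> 'a \<Rightarrow> real) \<Rightarrow> ('a \<Rightarrow> 'a \<Rightarrow> real) \<Rightarrow> ennreal" where
  "DX X d e = (SUP p \<in> topspace X \<times> topspace X. ennreal \<bar>d (fst p) (snd p) - e (fst p) (snd p)\<bar>)"

definition Met_open :: "'a topology \<Rightarrow> ('a \<Rightarrow> 'a \<Rightarrow> real) set \<Rightarrow> bool" where
  "Met_open X U \<longleftrightarrow> U \<subseteq> Met X \<and>
     (\<forall>d\<in>U. \<exists>r>0. \<forall>e\<in>Met X. DX X d e < ennreal r \<longrightarrow> e \<in> U)"

lemma istopology_Met_open: "istopology (Met_open X)"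
  unfolding istopology_def
proof (intro conjI allI impI)
  fix S T assume S: "Met_open X S" and T: "Met_open X T"
  show "Met_open X (S \<inter> T)"
    unfolding Met_open_def
  proof (intro conjI ballI)
    show "S \<inter> T \<subseteq> Met X" using S unfolding Met_open_def by blast
    fix d assume d: "d \<in> S \<inter> T"
    obtain r where r: "r > 0" "\<forall>e\<in>Met X. DX X d e < ennreal r \<longrightarrow> e \<in> S"
      using S d unfolding Met_open_def by blast
    obtain s where s: "s > 0" "\<forall>e\<in>Met X. DX X d e < ennreal s \<longrightarrow> e \<in> T"
      using T d unfolding Met_open_def by blast
    show "\<exists>r>0. \<forall>e\<in>Met X. DX X d e < ennreal r \<longrightarrow> e \<in> S \<inter> T"
    proof (intro exI[of _ "min r s"] conjI ballI impI)
      show "0 < min r s" using r s by simp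
      fix e assume "e \<in> Met X" "DX X d e < ennreal (min r s)"
      moreover have "ennreal (min r s) \<le> ennreal r" "ennreal (min r s) \<le> ennreal s"
        by (auto intro: ennreal_leI)
      ultimately have "DX X d e < ennreal r" "DX X d e < ennreal s"
        using order_less_le_trans by blast+
      then show "e \<in> S \<inter> T" using r(2) s(2) \<open>e \<in> Met X\<close> by blast
    qed
  qed
next
  fix K assume K: "\<forall>S\<in>K. Met_open X S"
  show "Met_open X (\<Union>K)"
    unfolding Met_open_def
  proof (intro conjI ballI)
    show "\<Union>K \<subseteq> Met X" using K unfolding Met_open_def by blast
    fix d assume "d \<in> \<Union>K"
    then obtain S where "S \<in> K" "d \<in> S" by blast
    then obtain r where "r > 0" "\<forall>e\<in>Met X. DX X d e < ennreal r \<longrightarrow> e \<in> S"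
      using K unfolding Met_open_def by blast
    then show "\<exists>r>0. \<forall>e\<in>Met X. DX X d e < ennreal r \<longrightarrow> e \<in> \<Union>K"
      using \<open>S \<in> K\<close> by blast
  qed
qed

definition Met_topology :: "'a topology \<Rightarrow> ('a \<Rightarrow> 'a \<Rightarrow> real) topology" where
  "Met_topology X = topology (Met_open X)"

lemma openin_Met_topology: "openin (Met_topology X) U \<longleftrightarrow> Met_open X U"
  unfolding Met_topology_def by (simp add: istopology_Met_open topology_inverse')

definition uniformly_disconnected :: "'a set \<Rightarrow> ('a \<Rightarrow> 'a \<Rightarrow> real) \<Rightarrow> bool" where
  "uniformly_disconnected M d \<longleftrightarrow>
     (\<exists>\<delta>. 0 < \<delta> \<and> \<delta> < 1 \<and>
        (\<forall>N::nat. \<forall>z::nat \<Rightarrow> 'a. (\<forall>i\<le>N. z i \<in> M) \<and> (\<exists>i\<le>N. \<exists>j\<le>N. z i \<noteq> z j) \<longrightarrow>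
            \<delta> * d (z 0) (z N) \<le> Max ((\<lambda>i. d (z i) (z (Suc i))) ` {..<N})))"

end

theory Submission
  imports Defs
begin

text \<open>If X is compact and 0-dimensional, a metric \<open>d \<in> Met(X)\<close> bounded by c admits partitions
  \<open>P\<^sub>k\<close> of X into clopen sets of diameter \<open>< c 2\<^sup>-\<^sup>k\<close>. Putting \<open>u(x,y) = 2\<^sup>-\<^sup>k\<close> for the first k
  at which x and y lie in different parts gives an ultrametric, and \<open>e = max(d, \<eta> u)\<close> is a
  compatible metric within \<open>\<eta>\<close> of d. Since \<open>\<eta> u \<le> e \<le> (2c + \<eta>) u\<close>, e inherits the chain
  inequality of u and is uniformly disconnected.

  Conversely, for a compact uniformly disconnected metric the classes of r-chain connectedness are
  clopen of diameter \<open>< r/\<delta>\<close>, so X is 0-dimensional. A non-compact X contains a closed discrete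
  sequence \<open>f\<close> and a continuous g with \<open>g (f n) = n\<close>; every metric \<open>D\<^sub>X\<close>-close to
  \<open>min(\<rho>, 1) + |g x - g y|\<close> has steps below 3 along f but unbounded distances from \<open>f 0\<close> to
  \<open>f N\<close>, so none of them is uniformly disconnected. The \<open>F\<^sub>\<sigma>\<close> property holds for every X: for a
  fixed constant \<open>\<delta>\<close> the defining inequality is closed under \<open>D\<^sub>X\<close>-limits.\<close>

section \<open>The topology of \<open>D\<^sub>X\<close> on \<open>Met(X)\<close>\<close>

lemma dist_diff_le_DX:
  assumes "x \<in> topspace X" "y \<in> topspace X"
  shows "ennreal \<bar>d x y - e x y\<bar> \<le> DX X d e"
  unfolding DX_def using assms by (intro SUP_upper2[of "(x, y)"]) auto

lemma dist_diff_less_if_DX_less: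
  assumes "DX X d e < ennreal r" "x \<in> topspace X" "y \<in> topspace X"
  shows "\<bar>d x y - e x y\<bar> < r"
proof -
  have "ennreal \<bar>d x y - e x y\<bar> < ennreal r"
    using dist_diff_le_DX[OF assms(2,3)] assms(1) by (rule order.strict_trans1)
  then show ?thesis
    by (simp add: ennreal_less_iff)
qed

lemma DX_le_if_dist_diff_le:
  assumes "\<And>x y. x \<in> topspace X \<Longrightarrow> y \<in> topspace X \<Longrightarrow> \<bar>d x y - e x y\<bar> \<le> c"
  shows "DX X d e \<le> ennreal c"
  unfolding DX_def using assms by (intro SUP_least) (auto intro: ennreal_leI)

lemma DX_self: "DX X d d = 0"
  using DX_le_if_dist_diff_le[of X d d 0] by simp

lemma DX_triangle: "DX X d f \<le> DX X d e + DX X e f"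
  unfolding DX_def[of X d f]
proof (rule SUP_least)
  fix p assume "p \<in> topspace X \<times> topspace X"
  then obtain x y where p: "p = (x, y)" "x \<in> topspace X" "y \<in> topspace X" by auto
  have "ennreal \<bar>d x y - f x y\<bar> \<le> ennreal (\<bar>d x y - e x y\<bar> + \<bar>e x y - f x y\<bar>)"
    by (intro ennreal_leI) linarith
  also have "\<dots> = ennreal \<bar>d x y - e x y\<bar> + ennreal \<bar>e x y - f x y\<bar>"
    by (simp add: ennreal_plus)
  also have "\<dots> \<le> DX X d e + DX X e f"
    using p by (intro add_mono dist_diff_le_DX)
  finally show "ennreal \<bar>d (fst p) (snd p) - f (fst p) (snd p)\<bar> \<le> DX X d e + DX X e f"
    using p by simp
qed

lemma Met_open_DX_ball:
  assumes "0 < r"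
  shows "Met_open X {e \<in> Met X. DX X d e < ennreal r}"
  unfolding Met_open_def
proof (intro conjI ballI)
  fix e assume "e \<in> {e \<in> Met X. DX X d e < ennreal r}"
  then have less: "DX X d e < ennreal r" by simp
  then have "DX X d e < \<infinity>"
    using order.strict_trans[OF less ennreal_less_top] by simp
  then obtain t where t: "0 \<le> t" "DX X d e = ennreal t"
    by (cases "DX X d e" rule: ennreal_cases) auto
  with less have "t < r"
    by (simp add: ennreal_less_iff)
  show "\<exists>s>0. \<forall>e'\<in>Met X. DX X e e' < ennreal s \<longrightarrow> e' \<in> {e \<in> Met X. DX X d e < ennreal r}"
  proof (intro exI[of _ "r - t"] conjI ballI impI CollectI)
    fix e' assume e': "e' \<in> Met X" "DX X e e' < ennreal (r - t)"
    then show "e' \<in> Met X" by simp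
    have "DX X d e' \<le> ennreal t + DX X e e'"
      using DX_triangle[of X d e' e] t(2) by simp
    also have "\<dots> < ennreal t + ennreal (r - t)"
      using e'(2) by (intro ennreal_add_left_cancel_less[THEN iffD2]) simp
    also have "\<dots> = ennreal r"
      using t \<open>t < r\<close> by (simp flip: ennreal_plus)
    finally show "DX X d e' < ennreal r" .
  qed (use \<open>t < r\<close> in simp)
qed auto

lemma topspace_Met_topology: "topspace (Met_topology X) = Met X"
proof -
  have "openin (Met_topology X) (Met X)"
    unfolding openin_Met_topology Met_open_def by (auto intro: exI[of _ 1])
  then have "Met X \<subseteq> topspace (Met_topology X)"
    by (rule openin_subset)
  moreover have "topspace (Met_topology X) \<subseteq> Met X"
    unfolding topspace_def openin_Met_topology Met_open_def by auto
  ultimately show ?thesis by blast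
qed

lemma Met_topology_dense_iff:
  assumes "S \<subseteq> Met X"
  shows "Met_topology X closure_of S = topspace (Met_topology X) \<longleftrightarrow>
         (\<forall>d\<in>Met X. \<forall>r>0. \<exists>e\<in>S. DX X d e < ennreal r)"
proof -
  have pointwise: "d \<in> Met_topology X closure_of S \<longleftrightarrow> (\<forall>r>0. \<exists>e\<in>S. DX X d e < ennreal r)"
    if d: "d \<in> Met X" for d
  proof
    assume cl: "d \<in> Met_topology X closure_of S"
    show "\<forall>r>0. \<exists>e\<in>S. DX X d e < ennreal r"
    proof (intro allI impI)
      fix r :: real assume "0 < r"
      define B where "B = {e \<in> Met X. DX X d e < ennreal r}"
      have "openin (Met_topology X) B"
        unfolding B_def using \<open>0 < r\<close> by (simp add: openin_Met_topology Met_open_DX_ball)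
      moreover have "d \<in> B"
        unfolding B_def using d \<open>0 < r\<close> by (simp add: DX_self)
      ultimately obtain e where "e \<in> S" "e \<in> B"
        using cl unfolding in_closure_of by blast
      then show "\<exists>e\<in>S. DX X d e < ennreal r"
        unfolding B_def by blast
    qed
  next
    assume approx: "\<forall>r>0. \<exists>e\<in>S. DX X d e < ennreal r"
    show "d \<in> Met_topology X closure_of S"
      unfolding in_closure_of
    proof (intro conjI allI impI)
      show "d \<in> topspace (Met_topology X)"
        using d by (simp add: topspace_Met_topology)
      fix T assume "d \<in> T \<and> openin (Met_topology X) T"
      then obtain r where "0 < r" "\<forall>e\<in>Met X. DX X d e < ennreal r \<longrightarrow> e \<in> T"
        unfolding openin_Met_topology Met_open_def by blast
      moreover obtain e where "e \<in> S" "DX X d e < ennreal r"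
        using approx \<open>0 < r\<close> by blast
      ultimately show "\<exists>e. e \<in> S \<and> e \<in> T"
        using assms by blast
    qed
  qed
  have "Met_topology X closure_of S \<subseteq> Met X"
    using closure_of_subset_topspace[of "Met_topology X" S] by (simp add: topspace_Met_topology)
  then have "Met_topology X closure_of S = Met X \<longleftrightarrow> (\<forall>d\<in>Met X. d \<in> Met_topology X closure_of S)"
    by blast
  then show ?thesis
    using pointwise by (simp add: topspace_Met_topology)
qed

section \<open>Uniform disconnectedness with a fixed constant\<close>

definition uniformly_disconnected_with :: "real \<Rightarrow> 'a set \<Rightarrow> ('a \<Rightarrow> 'a \<Rightarrow> real) \<Rightarrow> bool" where
  "uniformly_disconnected_with \<delta> M d \<longleftrightarrow>
     (\<forall>N z. (\<forall>i\<le>N. z i \<in> M) \<and> (\<exists>i\<le>N. \<exists>j\<le>N. z i \<noteq> z j) \<longrightarrow>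
        \<delta> * d (z 0) (z N) \<le> Max ((\<lambda>i. d (z i) (z (Suc i))) ` {..<N}))"

lemma uniformly_disconnected_iff_with:
  "uniformly_disconnected M d \<longleftrightarrow> (\<exists>\<delta>. 0 < \<delta> \<and> \<delta> < 1 \<and> uniformly_disconnected_with \<delta> M d)"
  unfolding uniformly_disconnected_def uniformly_disconnected_with_def by simp

lemma nonconstant_chain_length_pos: "(\<exists>i\<le>N. \<exists>j\<le>N. z i \<noteq> z j) \<Longrightarrow> 0 < (N::nat)"
  by (cases N) auto

lemma uniformly_disconnected_with_antimono:
  assumes "uniformly_disconnected_with \<delta> M d" "Metric_space M d" "0 \<le> \<delta>'" "\<delta>' \<le> \<delta>"
  shows "uniformly_disconnected_with \<delta>' M d"
  unfolding uniformly_disconnected_with_def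
proof (intro allI impI)
  fix N and z :: "nat \<Rightarrow> 'a"
  assume z: "(\<forall>i\<le>N. z i \<in> M) \<and> (\<exists>i\<le>N. \<exists>j\<le>N. z i \<noteq> z j)"
  have "\<delta>' * d (z 0) (z N) \<le> \<delta> * d (z 0) (z N)"
    using assms(3,4) Metric_space.nonneg[OF assms(2)] by (intro mult_right_mono) auto
  also have "\<dots> \<le> Max ((\<lambda>i. d (z i) (z (Suc i))) ` {..<N})"
    using assms(1) z unfolding uniformly_disconnected_with_def by blast
  finally show "\<delta>' * d (z 0) (z N) \<le> Max ((\<lambda>i. d (z i) (z (Suc i))) ` {..<N})" .
qed

lemma closedin_uniformly_disconnected_with:
  assumes "0 < \<delta>"
  shows "closedin (Met_topology X) {d \<in> Met X. uniformly_disconnected_with \<delta> (topspace X) d}"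
  unfolding closedin_def topspace_Met_topology openin_Met_topology Met_open_def
proof (intro conjI ballI)
  fix d assume "d \<in> Met X - {d \<in> Met X. uniformly_disconnected_with \<delta> (topspace X) d}"
  then obtain N z where z: "\<forall>i\<le>N. z i \<in> topspace X" and nc: "\<exists>i\<le>N. \<exists>j\<le>N. z i \<noteq> z j"
    and viol: "Max ((\<lambda>i. d (z i) (z (Suc i))) ` {..<N}) < \<delta> * d (z 0) (z N)"
    unfolding uniformly_disconnected_with_def by (auto simp: not_le)
  define m where "m = Max ((\<lambda>i. d (z i) (z (Suc i))) ` {..<N})"
  define r where "r = (\<delta> * d (z 0) (z N) - m) / (\<delta> + 1)"
  \<comment> \<open>a perturbation by less than r changes both sides of the violated inequality by less than the gap\<close>
  have "0 < r"
    using viol assms unfolding r_def m_def by simp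
  have gap: "\<delta> * d (z 0) (z N) = m + r * (\<delta> + 1)"
    using assms unfolding r_def by (simp add: field_simps)
  show "\<exists>r>0. \<forall>e\<in>Met X. DX X d e < ennreal r \<longrightarrow>
          e \<in> Met X - {d \<in> Met X. uniformly_disconnected_with \<delta> (topspace X) d}"
  proof (intro exI[of _ r] conjI ballI impI)
    fix e assume "e \<in> Met X" and de: "DX X d e < ennreal r"
    have "e (z i) (z (Suc i)) < m + r" if "i < N" for i
    proof -
      have "d (z i) (z (Suc i)) \<le> m"
        unfolding m_def using that by (intro Max_ge) auto
      moreover have "\<bar>d (z i) (z (Suc i)) - e (z i) (z (Suc i))\<bar> < r"
        using dist_diff_less_if_DX_less[OF de] z that by simp
      ultimately show ?thesis by linarith
    qed
    then have "Max ((\<lambda>i. e (z i) (z (Suc i))) ` {..<N}) < m + r"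
      using nonconstant_chain_length_pos[OF nc] by (subst Max_less_iff) auto
    moreover have "\<bar>d (z 0) (z N) - e (z 0) (z N)\<bar> < r"
      using dist_diff_less_if_DX_less[OF de] z by simp
    then have "\<delta> * d (z 0) (z N) - \<delta> * r < \<delta> * e (z 0) (z N)"
      using assms by (simp flip: right_diff_distrib)
    ultimately have "\<not> \<delta> * e (z 0) (z N) \<le> Max ((\<lambda>i. e (z i) (z (Suc i))) ` {..<N})"
      using gap by (simp add: algebra_simps)
    then show "e \<in> Met X - {d \<in> Met X. uniformly_disconnected_with \<delta> (topspace X) d}"
      using \<open>e \<in> Met X\<close> z nc unfolding uniformly_disconnected_with_def by blast
  qed (fact \<open>0 < r\<close>)
qed auto

lemma fsigma_in_uniformly_disconnected:
  "fsigma_in (Met_topology X) {d \<in> Met X. uniformly_disconnected (topspace X) d}"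
proof -
  define C where "C n = {d \<in> Met X. uniformly_disconnected_with (1 / (real n + 2)) (topspace X) d}"
    for n :: nat
  have "{d \<in> Met X. uniformly_disconnected (topspace X) d} = \<Union> (range C)"
  proof (intro equalityI subsetI)
    fix d assume "d \<in> {d \<in> Met X. uniformly_disconnected (topspace X) d}"
    then obtain \<delta> where d: "d \<in> Met X" "0 < \<delta>" "uniformly_disconnected_with \<delta> (topspace X) d"
      unfolding uniformly_disconnected_iff_with by auto
    obtain n :: nat where "1 / \<delta> < real n"
      using reals_Archimedean2 by blast
    then have "1 / (real n + 2) \<le> \<delta>"
      using d(2) by (simp add: field_simps)
    then have "d \<in> C n"
      using d uniformly_disconnected_with_antimono[of \<delta> "topspace X" d]
      unfolding C_def Met_def by auto
    then show "d \<in> \<Union> (range C)" by blast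
  next
    fix d assume "d \<in> \<Union> (range C)"
    then obtain n where "d \<in> C n" by blast
    moreover have "0 < 1 / (real n + 2)" "1 / (real n + 2) < 1"
      by simp_all
    ultimately show "d \<in> {d \<in> Met X. uniformly_disconnected (topspace X) d}"
      unfolding C_def uniformly_disconnected_iff_with by blast
  qed
  moreover have "closedin (Met_topology X) (C n)" for n
    unfolding C_def by (rule closedin_uniformly_disconnected_with) simp
  ultimately show ?thesis
    unfolding fsigma_in_def union_of_def by (intro exI[of _ "range C"]) auto
qed

section \<open>Ultrametrics from sequences of partitions\<close>

text \<open>\<open>R k x y\<close> reads ``x and y are not yet separated at level k''. Points that are never
  separated get distance 0, so in general this is only a pseudo-ultrametric.\<close>

definition level_ultrametric :: "(nat \<Rightarrow> 'a \<Rightarrow> 'a \<Rightarrow> bool) \<Rightarrow> 'a \<Rightarrow> 'a \<Rightarrow> real" where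
  "level_ultrametric R x y = (if \<forall>k. R k x y then 0 else (1/2) ^ (LEAST k. \<not> R k x y))"

lemma level_ultrametric_nonneg: "0 \<le> level_ultrametric R x y"
  by (simp add: level_ultrametric_def)

lemma level_ultrametric_le_one: "level_ultrametric R x y \<le> 1"
  by (simp add: level_ultrametric_def power_le_one)

lemma level_ultrametric_eq_0_iff: "level_ultrametric R x y = 0 \<longleftrightarrow> (\<forall>k. R k x y)"
  by (simp add: level_ultrametric_def)

lemma level_ultrametric_commute:
  assumes "\<And>k. R k x y \<longleftrightarrow> R k y x"
  shows "level_ultrametric R x y = level_ultrametric R y x"
  using assms by (simp add: level_ultrametric_def)

lemma level_ultrametric_ge_if_separated:
  assumes "\<not> R k x y"
  shows "(1/2) ^ k \<le> level_ultrametric R x y"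
proof -
  have "(LEAST k. \<not> R k x y) \<le> k"
    using assms by (rule Least_le)
  then have "(1/2::real) ^ k \<le> (1/2) ^ (LEAST k. \<not> R k x y)"
    by (rule power_decreasing) simp_all
  then show ?thesis
    using assms unfolding level_ultrametric_def by auto
qed

lemma level_ultrametric_less_imp_related:
  assumes "level_ultrametric R x y < (1/2) ^ k"
  shows "R k x y"
  using level_ultrametric_ge_if_separated[of R k x y] assms by linarith

lemma level_ultrametric_le_if_related:
  assumes "\<And>j. j \<le> k \<Longrightarrow> R j x y"
  shows "level_ultrametric R x y \<le> (1/2) ^ Suc k"
proof (cases "\<forall>k. R k x y")
  case False
  then have "\<not> R (LEAST k. \<not> R k x y) x y"
    using LeastI_ex[of "\<lambda>k. \<not> R k x y"] by blast
  then have "\<not> (LEAST k. \<not> R k x y) \<le> k"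
    using assms by blast
  then have "(1/2::real) ^ (LEAST k. \<not> R k x y) \<le> (1/2) ^ Suc k"
    by (intro power_decreasing) simp_all
  then show ?thesis
    using False unfolding level_ultrametric_def by simp
qed (simp add: level_ultrametric_def)

lemma level_ultrametric_ultra:
  assumes "\<And>k. R k x y \<Longrightarrow> R k y z \<Longrightarrow> R k x z"
  shows "level_ultrametric R x z \<le> max (level_ultrametric R x y) (level_ultrametric R y z)"
proof (cases "\<forall>k. R k x z")
  case True
  then have "level_ultrametric R x z = 0"
    by (simp add: level_ultrametric_eq_0_iff)
  then show ?thesis
    using level_ultrametric_nonneg[of R x y] by (simp add: le_max_iff_disj)
next
  case False
  define k where "k = (LEAST k. \<not> R k x z)"
  have "\<not> R k x z"
    unfolding k_def using False LeastI_ex[of "\<lambda>k. \<not> R k x z"] by blast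
  then have "\<not> R k x y \<or> \<not> R k y z"
    using assms by blast
  then have "(1/2) ^ k \<le> max (level_ultrametric R x y) (level_ultrametric R y z)"
    by (auto intro: level_ultrametric_ge_if_separated max.coboundedI1 max.coboundedI2)
  moreover have "level_ultrametric R x z = (1/2) ^ k"
    using False unfolding level_ultrametric_def k_def by simp
  ultimately show ?thesis by simp
qed

lemma geometric_less: "0 < s \<Longrightarrow> \<exists>k. c * (1/2::real) ^ k < s"
proof (cases "0 < c")
  case True
  assume "0 < s"
  then obtain k where "(1/2::real) ^ k < s / c"
    using real_arch_pow_inv[of "s / c" "1/2"] True by auto
  then show ?thesis
    using True by (auto simp: field_simps)
qed (auto intro: exI[of _ 0])

lemma le_level_ultrametric:
  assumes small: "\<And>k. R k x y \<Longrightarrow> a \<le> c * (1/2) ^ k" and "a \<le> c" "0 \<le> c"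
  shows "a \<le> 2 * c * level_ultrametric R x y"
proof (cases "\<forall>k. R k x y")
  case True
  have "a \<le> 0"
  proof (rule ccontr)
    assume "\<not> a \<le> 0"
    then obtain k where "c * (1/2) ^ k < a"
      using geometric_less[of a c] by auto
    then show False
      using small True by (meson not_le)
  qed
  then show ?thesis
    using True by (simp add: level_ultrametric_def)
next
  case False
  define k where "k = (LEAST k. \<not> R k x y)"
  have u: "level_ultrametric R x y = (1/2) ^ k"
    using False unfolding level_ultrametric_def k_def by simp
  show ?thesis
  proof (cases k)
    case 0
    then show ?thesis using u assms(2,3) by simp
  next
    case (Suc j)
    then have "R j x y"
      using not_less_Least[of j "\<lambda>k. \<not> R k x y"] unfolding k_def by auto
    then have "a \<le> c * (1/2) ^ j"
      by (rule small)
    also have "\<dots> = 2 * c * level_ultrametric R x y"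
      using u Suc by simp
    finally show ?thesis .
  qed
qed

lemma Metric_space_max_pseudometric:
  assumes "Metric_space M d"
    and "\<And>x y. 0 \<le> p x y" "\<And>x y. p x y = p y x" "\<And>x. x \<in> M \<Longrightarrow> p x x = 0"
    and "\<And>x y z. x \<in> M \<Longrightarrow> y \<in> M \<Longrightarrow> z \<in> M \<Longrightarrow> p x z \<le> p x y + p y z"
  shows "Metric_space M (\<lambda>x y. max (d x y) (p x y))"
proof -
  interpret Metric_space M d by (fact assms(1))
  show ?thesis
  proof
    fix x y z assume xyz: "x \<in> M" "y \<in> M" "z \<in> M"
    show "max (d x z) (p x z) \<le> max (d x y) (p x y) + max (d y z) (p y z)"
      using triangle[OF xyz] assms(5)[OF xyz] by linarith
  next
    fix x y assume xy: "x \<in> M" "y \<in> M"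
    show "max (d x y) (p x y) = 0 \<longleftrightarrow> x = y"
    proof
      assume "max (d x y) (p x y) = 0"
      then have "d x y = 0"
        using nonneg[of x y] by (metis max.cobounded1 order_antisym)
      then show "x = y"
        using zero[OF xy] by simp
    qed (use xy assms(4) in simp)
  qed (use assms(2,3) commute in \<open>auto simp: max_def\<close>)
qed

lemma ultrametric_chain_step:
  fixes u :: "'a \<Rightarrow> 'a \<Rightarrow> 'b::linorder"
  assumes ultra: "\<And>x y z. x \<in> M \<Longrightarrow> y \<in> M \<Longrightarrow> z \<in> M \<Longrightarrow> u x z \<le> max (u x y) (u y z)"
    and "\<forall>i\<le>N. z i \<in> M" "0 < N"
  shows "\<exists>i<N. u (z 0) (z N) \<le> u (z i) (z (Suc i))"
  using assms(2,3)
proof (induction N)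
  case (Suc N)
  show ?case
  proof (cases "N = 0")
    case False
    then obtain i where i: "i < N" "u (z 0) (z N) \<le> u (z i) (z (Suc i))"
      using Suc by auto
    have "u (z 0) (z (Suc N)) \<le> max (u (z 0) (z N)) (u (z N) (z (Suc N)))"
      using ultra Suc.prems by auto
    then consider "u (z 0) (z (Suc N)) \<le> u (z 0) (z N)" | "u (z 0) (z (Suc N)) \<le> u (z N) (z (Suc N))"
      by (metis le_max_iff_disj)
    then show ?thesis
    proof cases
      case 1
      then show ?thesis using i by (intro exI[of _ i]) auto
    next
      case 2
      then show ?thesis by (intro exI[of _ N]) auto
    qed
  qed simp
qed simp

lemma uniformly_disconnected_if_comparable_ultrametric:
  assumes ultra: "\<And>x y z. x \<in> M \<Longrightarrow> y \<in> M \<Longrightarrow> z \<in> M \<Longrightarrow> u x z \<le> max (u x y) (u y z)"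
    and "\<And>x y. 0 \<le> u x y" and "0 < a" "0 < b"
    and comparable: "\<And>x y. x \<in> M \<Longrightarrow> y \<in> M \<Longrightarrow> a * u x y \<le> e x y \<and> e x y \<le> b * u x y"
  shows "uniformly_disconnected M e"
  unfolding uniformly_disconnected_iff_with
proof (intro exI conjI)
  define \<delta> where "\<delta> = a / (a + b)"
  show "0 < \<delta>" "\<delta> < 1"
    unfolding \<delta>_def using assms(3,4) by auto
  show "uniformly_disconnected_with \<delta> M e"
    unfolding uniformly_disconnected_with_def
  proof (intro allI impI)
    fix N and z :: "nat \<Rightarrow> 'a"
    assume z: "(\<forall>i\<le>N. z i \<in> M) \<and> (\<exists>i\<le>N. \<exists>j\<le>N. z i \<noteq> z j)"
    have "0 < N"
      using z by (blast intro: nonconstant_chain_length_pos)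
    then obtain i where i: "i < N" "u (z 0) (z N) \<le> u (z i) (z (Suc i))"
      using ultrametric_chain_step[of M u N z, OF ultra] z by blast
    have "\<delta> * b \<le> a"
      unfolding \<delta>_def using assms(3,4) by (simp add: field_simps)
    have "\<delta> * e (z 0) (z N) \<le> \<delta> * (b * u (z 0) (z N))"
      using comparable z \<open>0 < \<delta>\<close> by (intro mult_left_mono) auto
    also have "\<dots> = (\<delta> * b) * u (z 0) (z N)"
      by (simp only: mult.assoc)
    also have "\<dots> \<le> a * u (z 0) (z N)"
      using \<open>\<delta> * b \<le> a\<close> assms(2) by (rule mult_right_mono)
    also have "\<dots> \<le> a * u (z i) (z (Suc i))"
      using i assms(3) by (simp add: mult_left_mono)
    also have "\<dots> \<le> e (z i) (z (Suc i))"
      using comparable z i by simp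
    also have "\<dots> \<le> Max ((\<lambda>i. e (z i) (z (Suc i))) ` {..<N})"
      using i by (intro Max_ge) auto
    finally show "\<delta> * e (z 0) (z N) \<le> Max ((\<lambda>i. e (z i) (z (Suc i))) ` {..<N})" .
  qed
qed

section \<open>Approximation on compact 0-dimensional spaces\<close>

lemma mtopology_eq_if_balls:
  assumes ms: "Metric_space M e" and top: "topspace X = M"
    and ball_in_open: "\<And>U x. openin X U \<Longrightarrow> x \<in> U \<Longrightarrow> \<exists>r>0. Metric_space.mball M e x r \<subseteq> U"
    and open_in_ball: "\<And>x r. x \<in> M \<Longrightarrow> 0 < r \<Longrightarrow>
                         \<exists>W. openin X W \<and> x \<in> W \<and> W \<subseteq> Metric_space.mball M e x r"
  shows "Metric_space.mtopology M e = X"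
proof -
  interpret E: Metric_space M e by (fact ms)
  show ?thesis
  proof (rule topology_eq[THEN iffD2], intro allI iffI)
    fix U assume "openin E.mtopology U"
    then have U: "U \<subseteq> M" "\<And>x. x \<in> U \<Longrightarrow> \<exists>r>0. E.mball x r \<subseteq> U"
      by (auto simp: E.openin_mtopology)
    show "openin X U"
    proof (subst openin_subopen, intro ballI)
      fix x assume "x \<in> U"
      obtain r where "0 < r" "E.mball x r \<subseteq> U"
        using U(2)[OF \<open>x \<in> U\<close>] by blast
      moreover obtain W where "openin X W" "x \<in> W" "W \<subseteq> E.mball x r"
        using open_in_ball \<open>0 < r\<close> U(1) \<open>x \<in> U\<close> by blast
      ultimately show "\<exists>T. openin X T \<and> x \<in> T \<and> T \<subseteq> U" by blast
    qed
  next
    fix U assume "openin X U"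
    then show "openin E.mtopology U"
      unfolding E.openin_mtopology using openin_subset[of X U] top ball_in_open by auto
  qed
qed

lemma fine_disjoint_open_cover:
  assumes d: "d \<in> Met X" and "compact_space X" "covering_dim_zero X" "0 < \<rho>"
  shows "\<exists>P. (\<forall>V\<in>P. openin X V) \<and> \<Union>P = topspace X \<and> pairwise disjnt P \<and>
             (\<forall>V\<in>P. \<forall>x\<in>V. \<forall>y\<in>V. d x y < \<rho>)"
proof -
  interpret Metric_space "topspace X" d
    using d by (simp add: Met_def)
  have mt: "mtopology = X"
    using d by (simp add: Met_def)
  define C where "C = (\<lambda>x. mball x (\<rho>/2)) ` topspace X"
  have C_open: "openin X U" if "U \<in> C" for U
    using that openin_mball[of _ "\<rho>/2"] unfolding C_def mt by blast
  have "\<Union>C = topspace X"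
  proof
    show "\<Union>C \<subseteq> topspace X"
      unfolding C_def using mball_subset_mspace by blast
    show "topspace X \<subseteq> \<Union>C"
    proof
      fix x assume "x \<in> topspace X"
      then have "x \<in> mball x (\<rho>/2)"
        using \<open>0 < \<rho>\<close> by simp
      then show "x \<in> \<Union>C"
        unfolding C_def by (rule UN_I[OF \<open>x \<in> topspace X\<close>])
    qed
  qed
  then obtain F where F: "finite F" "F \<subseteq> C" "topspace X \<subseteq> \<Union>F"
    using compactinD[of X "topspace X" C] assms(2) C_open unfolding compact_space_def by auto
  then have "\<Union>F = topspace X"
    using Union_mono[OF F(2)] \<open>\<Union>C = topspace X\<close> by blast
  have "\<forall>U\<in>F. openin X U"
    using C_open F(2) by blast
  then obtain P where P: "\<forall>V\<in>P. openin X V" "\<Union>P = topspace X" "\<forall>V\<in>P. \<exists>U\<in>F. V \<subseteq> U"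
    "pairwise disjnt P"
    using assms(3)[unfolded covering_dim_zero_def, rule_format, OF conjI[OF F(1) conjI]]
      \<open>\<Union>F = topspace X\<close> by blast
  have "d x y < \<rho>" if "V \<in> P" "x \<in> V" "y \<in> V" for V x y
  proof -
    obtain U where "U \<in> F" "V \<subseteq> U"
      using P(3) \<open>V \<in> P\<close> by blast
    then have "U \<in> C"
      using F(2) by blast
    then obtain a where "U = mball a (\<rho>/2)"
      unfolding C_def by (rule imageE)
    then have "x \<in> mball a (\<rho>/2)" "y \<in> mball a (\<rho>/2)"
      using \<open>V \<subseteq> U\<close> that by blast+
    then have "d a x < \<rho>/2" "d a y < \<rho>/2" "a \<in> topspace X" "x \<in> topspace X" "y \<in> topspace X"
      by simp_all
    then show ?thesis
      using triangle[of x a y] commute[of x a] by linarith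
  qed
  then show ?thesis
    using P by blast
qed

locale shrinking_partitions =
  fixes X :: "'a topology" and d :: "'a \<Rightarrow> 'a \<Rightarrow> real" and c :: real and P :: "nat \<Rightarrow> 'a set set"
  assumes d_Met: "d \<in> Met X" and c_nonneg: "0 \<le> c"
    and dist_le: "\<And>x y. x \<in> topspace X \<Longrightarrow> y \<in> topspace X \<Longrightarrow> d x y \<le> c"
    and openin_part: "\<And>k V. V \<in> P k \<Longrightarrow> openin X V"
    and Union_parts: "\<And>k. \<Union>(P k) = topspace X"
    and disjoint_parts: "\<And>k. pairwise disjnt (P k)"
    and dist_less_in_part: "\<And>k V x y. V \<in> P k \<Longrightarrow> x \<in> V \<Longrightarrow> y \<in> V \<Longrightarrow> d x y < c * (1/2) ^ k"
begin

sublocale Metric_space "topspace X" d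
  using d_Met by (simp add: Met_def)

lemma mtopology_eq: "mtopology = X"
  using d_Met by (simp add: Met_def)

definition same_part :: "nat \<Rightarrow> 'a \<Rightarrow> 'a \<Rightarrow> bool" where
  "same_part k x y \<longleftrightarrow> (\<exists>V\<in>P k. x \<in> V \<and> y \<in> V)"

definition part_ultrametric :: "'a \<Rightarrow> 'a \<Rightarrow> real" where
  "part_ultrametric = level_ultrametric same_part"

definition approx :: "real \<Rightarrow> 'a \<Rightarrow> 'a \<Rightarrow> real" where
  "approx \<eta> x y = max (d x y) (\<eta> * part_ultrametric x y)"

lemma same_part_commute: "same_part k x y \<longleftrightarrow> same_part k y x"
  unfolding same_part_def by blast

lemma same_part_refl: "x \<in> topspace X \<Longrightarrow> same_part k x x"
  unfolding same_part_def using Union_parts[of k] by blast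

lemma same_part_trans:
  assumes "same_part k x y" "same_part k y z"
  shows "same_part k x z"
proof -
  obtain V W where "V \<in> P k" "x \<in> V" "y \<in> V" "W \<in> P k" "y \<in> W" "z \<in> W"
    using assms unfolding same_part_def by blast
  moreover have "V = W"
    using disjoint_parts[of k] \<open>V \<in> P k\<close> \<open>W \<in> P k\<close> \<open>y \<in> V\<close> \<open>y \<in> W\<close>
    by (metis disjnt_iff pairwiseD)
  ultimately show ?thesis
    unfolding same_part_def by blast
qed

lemma openin_same_part: "openin X {y. same_part k x y}"
proof -
  have "{y. same_part k x y} = \<Union>{V \<in> P k. x \<in> V}"
    unfolding same_part_def by auto
  then show ?thesis
    using openin_part by auto
qed

lemma part_ultrametric_nonneg: "0 \<le> part_ultrametric x y"
  by (simp add: part_ultrametric_def level_ultrametric_nonneg)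

lemma part_ultrametric_ultra: "part_ultrametric x z \<le> max (part_ultrametric x y) (part_ultrametric y z)"
  unfolding part_ultrametric_def by (rule level_ultrametric_ultra) (rule same_part_trans)

lemma dist_le_part_ultrametric:
  assumes "x \<in> topspace X" "y \<in> topspace X"
  shows "d x y \<le> 2 * c * part_ultrametric x y"
  unfolding part_ultrametric_def
proof (rule le_level_ultrametric)
  show "d x y \<le> c * (1/2) ^ k" if "same_part k x y" for k
    using that dist_less_in_part unfolding same_part_def by (blast intro: less_imp_le)
qed (use assms dist_le c_nonneg in auto)

lemma Metric_space_approx:
  assumes "0 \<le> \<eta>"
  shows "Metric_space (topspace X) (approx \<eta>)"
  unfolding approx_def
proof (rule Metric_space_max_pseudometric)
  show "Metric_space (topspace X) d" ..
  show "0 \<le> \<eta> * part_ultrametric x y" for x y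
    using assms part_ultrametric_nonneg by simp
  show "\<eta> * part_ultrametric x y = \<eta> * part_ultrametric y x" for x y
    unfolding part_ultrametric_def using same_part_commute
    by (metis level_ultrametric_commute)
  show "\<eta> * part_ultrametric x x = 0" if "x \<in> topspace X" for x
    using same_part_refl[OF that] by (simp add: part_ultrametric_def level_ultrametric_eq_0_iff)
  show "\<eta> * part_ultrametric x z \<le> \<eta> * part_ultrametric x y + \<eta> * part_ultrametric y z" for x y z
  proof -
    have "part_ultrametric x z \<le> part_ultrametric x y + part_ultrametric y z"
      using part_ultrametric_ultra[of x z y] part_ultrametric_nonneg[of x y]
        part_ultrametric_nonneg[of y z] by linarith
    then show ?thesis
      using assms by (simp add: mult_left_mono flip: distrib_left)
  qed
qed

lemma mtopology_approx:
  assumes "0 < \<eta>"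
  shows "Metric_space.mtopology (topspace X) (approx \<eta>) = X"
proof (rule mtopology_eq_if_balls[OF Metric_space_approx refl])
  interpret A: Metric_space "topspace X" "approx \<eta>"
    using assms by (simp add: Metric_space_approx)
  show "0 \<le> \<eta>" using assms by simp
  fix U x assume "openin X U" "x \<in> U"
  then obtain s where "0 < s" "mball x s \<subseteq> U"
    using openin_mtopology[of U] mtopology_eq by auto
  obtain k where k: "c * (1/2) ^ k < s"
    using geometric_less[OF \<open>0 < s\<close>] by blast
  show "\<exists>r>0. A.mball x r \<subseteq> U"
  proof (intro exI[of _ "\<eta> * (1/2) ^ k"] conjI subsetI)
    fix y assume "y \<in> A.mball x (\<eta> * (1/2) ^ k)"
    then have y: "x \<in> topspace X" "y \<in> topspace X" "approx \<eta> x y < \<eta> * (1/2) ^ k"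
      by auto
    then have "part_ultrametric x y < (1/2) ^ k"
      using assms unfolding approx_def by simp
    then have "same_part k x y"
      unfolding part_ultrametric_def by (rule level_ultrametric_less_imp_related)
    then have "d x y < s"
      using dist_less_in_part k unfolding same_part_def by force
    then show "y \<in> U"
      using \<open>mball x s \<subseteq> U\<close> y by auto
  qed (use assms in simp)
next
  interpret A: Metric_space "topspace X" "approx \<eta>"
    using assms by (simp add: Metric_space_approx)
  fix x and s :: real assume x: "x \<in> topspace X" and "0 < s"
  obtain k where k: "\<eta> * (1/2) ^ k < s"
    using geometric_less[OF \<open>0 < s\<close>] by blast
  define W where "W = mball x s \<inter> (\<Inter>j\<in>{..k}. {y. same_part j x y})"
  have "openin X W"
    unfolding W_def using openin_mball[of x s, unfolded mtopology_eq] openin_same_part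
    by (intro openin_Int openin_INT2) auto
  moreover have "x \<in> W"
    unfolding W_def using x \<open>0 < s\<close> same_part_refl by auto
  moreover have "W \<subseteq> A.mball x s"
  proof
    fix y assume "y \<in> W"
    then have y: "y \<in> topspace X" "d x y < s" "\<And>j. j \<le> k \<Longrightarrow> same_part j x y"
      unfolding W_def by auto
    have "part_ultrametric x y \<le> (1/2) ^ Suc k"
      unfolding part_ultrametric_def using y(3) by (rule level_ultrametric_le_if_related)
    also have "\<dots> \<le> (1/2) ^ k"
      by simp
    finally have "\<eta> * part_ultrametric x y < s"
      using k assms by (smt (verit) mult_left_mono)
    then have "approx \<eta> x y < s"
      using y unfolding approx_def by simp
    then show "y \<in> A.mball x s"
      using x y by simp
  qed
  ultimately show "\<exists>W. openin X W \<and> x \<in> W \<and> W \<subseteq> A.mball x s"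
    by blast
qed

lemma uniformly_disconnected_approx:
  assumes "0 < \<eta>"
  shows "uniformly_disconnected (topspace X) (approx \<eta>)"
proof (rule uniformly_disconnected_if_comparable_ultrametric)
  show "part_ultrametric x z \<le> max (part_ultrametric x y) (part_ultrametric y z)" for x y z
    by (rule part_ultrametric_ultra)
  show "\<eta> * part_ultrametric x y \<le> approx \<eta> x y \<and> approx \<eta> x y \<le> (2 * c + \<eta>) * part_ultrametric x y"
    if "x \<in> topspace X" "y \<in> topspace X" for x y
  proof -
    have "0 \<le> \<eta> * part_ultrametric x y" "0 \<le> c * part_ultrametric x y"
      using assms c_nonneg part_ultrametric_nonneg[of x y] by simp_all
    then show ?thesis
      using dist_le_part_ultrametric[OF that] unfolding approx_def distrib_right by auto
  qed
qed (use assms c_nonneg part_ultrametric_nonneg in auto)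

lemma DX_approx_le:
  assumes "0 \<le> \<eta>"
  shows "DX X d (approx \<eta>) \<le> ennreal \<eta>"
proof (rule DX_le_if_dist_diff_le)
  fix x y
  have "\<eta> * part_ultrametric x y \<le> \<eta>"
    using assms part_ultrametric_nonneg[of x y]
    by (simp add: mult_left_le level_ultrametric_le_one part_ultrametric_def)
  moreover have "approx \<eta> x y = d x y \<or> approx \<eta> x y = \<eta> * part_ultrametric x y"
    "d x y \<le> approx \<eta> x y"
    unfolding approx_def by auto
  ultimately show "\<bar>d x y - approx \<eta> x y\<bar> \<le> \<eta>"
    using nonneg[of x y] assms by linarith
qed

end

lemma uniformly_disconnected_dense:
  assumes "compact_space X" "covering_dim_zero X" "d \<in> Met X" "0 < r"
  shows "\<exists>e\<in>Met X. uniformly_disconnected (topspace X) e \<and> DX X d e < ennreal r"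
proof -
  interpret Metric_space "topspace X" d
    using assms(3) by (simp add: Met_def)
  have "mbounded (topspace X)"
    using assms(1,3) by (intro compactin_imp_mbounded) (simp add: Met_def compact_space_def)
  then obtain c where c: "0 < c" "\<And>x y. x \<in> topspace X \<Longrightarrow> y \<in> topspace X \<Longrightarrow> d x y \<le> c"
    unfolding mbounded_alt_pos by blast
  have "\<forall>k. \<exists>P. (\<forall>V\<in>P. openin X V) \<and> \<Union>P = topspace X \<and> pairwise disjnt P \<and>
             (\<forall>V\<in>P. \<forall>x\<in>V. \<forall>y\<in>V. d x y < c * (1/2) ^ k)"
    using fine_disjoint_open_cover[OF assms(3,1,2)] c(1) by simp
  then obtain P where P: "\<And>k. (\<forall>V\<in>P k. openin X V) \<and> \<Union>(P k) = topspace X \<and>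
      pairwise disjnt (P k) \<and> (\<forall>V\<in>P k. \<forall>x\<in>V. \<forall>y\<in>V. d x y < c * (1/2) ^ k)"
    by metis
  interpret shrinking_partitions X d c P
    using assms(3) c P by unfold_locales auto
  have "DX X d (approx (r/2)) \<le> ennreal (r/2)"
    using assms(4) by (intro DX_approx_le) simp
  also have "\<dots> < ennreal r"
    using assms(4) by (simp add: ennreal_less_iff)
  finally show ?thesis
    using assms(4) Metric_space_approx mtopology_approx uniformly_disconnected_approx
    by (intro bexI[of _ "approx (r/2)"]) (auto simp: Met_def)
qed

section \<open>Chains in uniformly disconnected spaces\<close>

definition chain_connected :: "'a set \<Rightarrow> ('a \<Rightarrow> 'a \<Rightarrow> real) \<Rightarrow> real \<Rightarrow> 'a \<Rightarrow> 'a \<Rightarrow> bool" where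
  "chain_connected M e r x y \<longleftrightarrow>
     (\<exists>N z. z 0 = x \<and> z N = y \<and> (\<forall>i\<le>N. z i \<in> M) \<and> (\<forall>i<N. e (z i) (z (Suc i)) < r))"

lemma chain_connected_refl: "x \<in> M \<Longrightarrow> chain_connected M e r x x"
  unfolding chain_connected_def by (intro exI[of _ 0] exI[of _ "\<lambda>_. x"]) simp

lemma chain_connected_step:
  assumes "x \<in> M" "y \<in> M" "e x y < r"
  shows "chain_connected M e r x y"
  unfolding chain_connected_def
  using assms by (intro exI[of _ 1] exI[of _ "\<lambda>i. if i = 0 then x else y"]) (auto simp: le_Suc_eq)

lemma chain_connected_mem: "chain_connected M e r x y \<Longrightarrow> x \<in> M \<and> y \<in> M"
  unfolding chain_connected_def by (metis le0 order_refl)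

lemma chain_connected_trans:
  assumes "chain_connected M e r x y" "chain_connected M e r y w"
  shows "chain_connected M e r x w"
proof -
  obtain N1 z1 where 1: "z1 0 = x" "z1 N1 = y" "\<forall>i\<le>N1. z1 i \<in> M" "\<forall>i<N1. e (z1 i) (z1 (Suc i)) < r"
    using assms(1) unfolding chain_connected_def by blast
  obtain N2 z2 where 2: "z2 0 = y" "z2 N2 = w" "\<forall>i\<le>N2. z2 i \<in> M" "\<forall>i<N2. e (z2 i) (z2 (Suc i)) < r"
    using assms(2) unfolding chain_connected_def by blast
  define z where "z i = (if i \<le> N1 then z1 i else z2 (i - N1))" for i
  have z_ge: "z i = z2 (i - N1)" if "N1 \<le> i" for i
    using that 1(2) 2(1) unfolding z_def by (cases "i = N1") auto
  show ?thesis
    unfolding chain_connected_def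
  proof (intro exI[of _ "N1 + N2"] exI[of _ z] conjI allI impI)
    show "z 0 = x" using 1(1) unfolding z_def by simp
    show "z (N1 + N2) = w" using z_ge[of "N1 + N2"] 2(2) by simp
  next
    fix i assume "i \<le> N1 + N2"
    then show "z i \<in> M" using 1(3) 2(3) unfolding z_def by auto
  next
    fix i assume i: "i < N1 + N2"
    show "e (z i) (z (Suc i)) < r"
    proof (cases "i < N1")
      case True
      then show ?thesis using 1(4) unfolding z_def by auto
    next
      case False
      then have "z i = z2 (i - N1)" "z (Suc i) = z2 (Suc (i - N1))"
        using z_ge[of i] z_ge[of "Suc i"] by (auto simp: Suc_diff_le)
      then show ?thesis using 2(4) i False by auto
    qed
  qed
qed

lemma chain_connected_sym:
  assumes "chain_connected M e r x y" "\<And>a b. e a b = e b a"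
  shows "chain_connected M e r y x"
proof -
  obtain N z where z: "z 0 = x" "z N = y" "\<forall>i\<le>N. z i \<in> M" "\<forall>i<N. e (z i) (z (Suc i)) < r"
    using assms(1) unfolding chain_connected_def by blast
  show ?thesis
    unfolding chain_connected_def
  proof (intro exI[of _ N] exI[of _ "\<lambda>i. z (N - i)"] conjI allI impI)
    fix i assume i: "i < N"
    then have "e (z (N - Suc i)) (z (Suc (N - Suc i))) < r"
      using z(4) by auto
    moreover have "Suc (N - Suc i) = N - i"
      using i by simp
    ultimately show "e (z (N - i)) (z (N - Suc i)) < r"
      using assms(2) by metis
  qed (use z in auto)
qed

lemma equiv_chain_connected:
  assumes "\<And>a b. e a b = e b a"
  shows "equiv M {(x, y). chain_connected M e r x y}"
proof (rule equivI)
  show "{(x, y). chain_connected M e r x y} \<subseteq> M \<times> M"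
    by (auto dest: chain_connected_mem)
  show "refl_on M {(x, y). chain_connected M e r x y}"
    by (rule refl_onI) (simp add: chain_connected_refl)
  show "sym {(x, y). chain_connected M e r x y}"
    by (rule symI) (simp add: chain_connected_sym assms)
  show "trans {(x, y). chain_connected M e r x y}"
    by (rule transI) (auto intro: chain_connected_trans)
qed

lemma openin_chain_class:
  assumes "Metric_space M e" "0 < r"
  shows "openin (Metric_space.mtopology M e) {y. chain_connected M e r x y}"
proof -
  interpret Metric_space M e by (fact assms(1))
  show ?thesis
    unfolding openin_mtopology
  proof (intro conjI allI impI)
    show "{y. chain_connected M e r x y} \<subseteq> M"
      by (auto dest: chain_connected_mem)
    fix y assume "y \<in> {y. chain_connected M e r x y}"
    then have xy: "chain_connected M e r x y" by simp
    show "\<exists>s>0. mball y s \<subseteq> {y. chain_connected M e r x y}"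
    proof (intro exI[of _ r] conjI subsetI)
      fix w assume "w \<in> mball y r"
      then have "chain_connected M e r y w"
        by (auto intro: chain_connected_step)
      then show "w \<in> {y. chain_connected M e r x y}"
        using chain_connected_trans[OF xy] by simp
    qed (fact assms(2))
  qed
qed

lemma dist_less_if_chain_connected:
  assumes "Metric_space M e" "uniformly_disconnected_with \<delta> M e" "0 < r"
    and "chain_connected M e r x y"
  shows "\<delta> * e x y < r"
proof -
  obtain N z where z: "z 0 = x" "z N = y" "\<forall>i\<le>N. z i \<in> M" "\<forall>i<N. e (z i) (z (Suc i)) < r"
    using assms(4) unfolding chain_connected_def by blast
  show ?thesis
  proof (cases "x = y")
    case True
    then show ?thesis
      using z assms(1,3) Metric_space.zero by fastforce
  next
    case False
    then have nc: "\<exists>i\<le>N. \<exists>j\<le>N. z i \<noteq> z j"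
      using z(1,2) by (intro exI[of _ 0]) auto
    then have "\<delta> * e x y \<le> Max ((\<lambda>i. e (z i) (z (Suc i))) ` {..<N})"
      using assms(2) z unfolding uniformly_disconnected_with_def by blast
    also have "\<dots> < r"
      using z(4) nonconstant_chain_length_pos[OF nc] by (subst Max_less_iff) auto
    finally show ?thesis .
  qed
qed

lemma finite_if_compact_disjoint_open_cover:
  assumes "compact_space X" "\<And>V. V \<in> \<V> \<Longrightarrow> openin X V" "\<Union>\<V> = topspace X"
    and "pairwise disjnt \<V>" "{} \<notin> \<V>"
  shows "finite \<V>"
proof -
  obtain \<F> where \<F>: "finite \<F>" "\<F> \<subseteq> \<V>" "topspace X \<subseteq> \<Union>\<F>"
    using compactinD[of X "topspace X" \<V>] assms(1,2,3) unfolding compact_space_def by auto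
  have "\<V> \<subseteq> \<F>"
  proof
    fix V assume "V \<in> \<V>"
    then obtain x where "x \<in> V"
      using assms(5) by (metis ex_in_conv)
    then obtain W where "W \<in> \<F>" "x \<in> W"
      using \<open>V \<in> \<V>\<close> assms(3) \<F>(3) by blast
    then have "W = V"
      using assms(4) \<F>(2) \<open>V \<in> \<V>\<close> \<open>x \<in> V\<close> by (metis disjnt_iff pairwiseD subsetD)
    then show "V \<in> \<F>"
      using \<open>W \<in> \<F>\<close> by simp
  qed
  then show ?thesis
    using \<F>(1) by (rule finite_subset)
qed

text \<open>The classes of r-chain connectedness are open, and for \<open>r = \<delta> \<epsilon>\<close> they have diameter
  below a Lebesgue number \<open>\<epsilon>\<close>, so they form the required disjoint refinement.\<close>

lemma covering_dim_zero_if_uniformly_disconnected: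
  assumes "compact_space X" "e \<in> Met X" "uniformly_disconnected (topspace X) e"
  shows "covering_dim_zero X"
  unfolding covering_dim_zero_def
proof (intro allI impI)
  interpret Metric_space "topspace X" e
    using assms(2) by (simp add: Met_def)
  have mt: "mtopology = X"
    using assms(2) by (simp add: Met_def)
  obtain \<delta> where "0 < \<delta>" and \<delta>: "uniformly_disconnected_with \<delta> (topspace X) e"
    using assms(3) unfolding uniformly_disconnected_iff_with by blast
  fix \<U> assume \<U>: "finite \<U> \<and> (\<forall>U\<in>\<U>. openin X U) \<and> \<Union>\<U> = topspace X"
  obtain \<epsilon> where "0 < \<epsilon>" and \<epsilon>: "\<forall>x\<in>topspace X. \<exists>U\<in>\<U>. mball x \<epsilon> \<subseteq> U"
    using lebesgue_number[of "topspace X" \<U>] assms(1) \<U> unfolding mt compact_space_def by auto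
  define \<rho> where "\<rho> = {(x, y). chain_connected (topspace X) e (\<delta> * \<epsilon>) x y}"
  have \<rho>: "equiv (topspace X) \<rho>"
    unfolding \<rho>_def by (rule equiv_chain_connected) (rule commute)
  have class_eq: "\<rho> `` {x} = {y. chain_connected (topspace X) e (\<delta> * \<epsilon>) x y}" for x
    unfolding \<rho>_def by auto
  define \<V> where "\<V> = topspace X // \<rho>"
  have open_\<V>: "openin X V" if "V \<in> \<V>" for V
    using that \<open>0 < \<delta>\<close> \<open>0 < \<epsilon>\<close> openin_chain_class[OF Metric_space_axioms, of "\<delta> * \<epsilon>"]
    unfolding \<V>_def mt by (auto elim!: quotientE simp: class_eq)
  have refines: "\<exists>U\<in>\<U>. V \<subseteq> U" if "V \<in> \<V>" for V
  proof -
    from that obtain x where x: "V = \<rho> `` {x}" "x \<in> topspace X"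
      unfolding \<V>_def by (rule quotientE)
    obtain U where "U \<in> \<U>" "mball x \<epsilon> \<subseteq> U"
      using \<epsilon> x(2) by blast
    moreover have "V \<subseteq> mball x \<epsilon>"
    proof
      fix y assume "y \<in> V"
      then have "chain_connected (topspace X) e (\<delta> * \<epsilon>) x y"
        using x(1) class_eq by simp
      then have "\<delta> * e x y < \<delta> * \<epsilon>" "y \<in> topspace X"
        using dist_less_if_chain_connected[OF Metric_space_axioms \<delta>] \<open>0 < \<delta>\<close> \<open>0 < \<epsilon>\<close>
          chain_connected_mem[of "topspace X" e "\<delta> * \<epsilon>" x y] by auto
      then show "y \<in> mball x \<epsilon>"
        using x(2) \<open>0 < \<delta>\<close> by simp
    qed
    ultimately show ?thesis by blast
  qed
  have "\<Union>\<V> = topspace X"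
    unfolding \<V>_def using \<rho> by (rule Union_quotient)
  moreover have "pairwise disjnt \<V>"
    unfolding \<V>_def pairwise_def disjnt_def using quotient_disj[OF \<rho>] by blast
  moreover have "{} \<notin> \<V>"
    unfolding \<V>_def using in_quotient_imp_non_empty[OF \<rho>] by blast
  ultimately have "finite \<V>"
    by (intro finite_if_compact_disjoint_open_cover[OF assms(1) open_\<V>])
  with \<open>\<Union>\<V> = topspace X\<close> \<open>pairwise disjnt \<V>\<close>
  show "\<exists>\<V>. finite \<V> \<and> (\<forall>V\<in>\<V>. openin X V) \<and> \<Union>\<V> = topspace X \<and>
      (\<forall>V\<in>\<V>. \<exists>U\<in>\<U>. V \<subseteq> U) \<and> pairwise disjnt \<V>"
    using open_\<V> refines by (intro exI[of _ \<V>]) auto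
qed

section \<open>Non-compact spaces\<close>

lemma metrizable_space_iff_Met: "metrizable_space X \<longleftrightarrow> Met X \<noteq> {}"
proof
  assume "metrizable_space X"
  then obtain M d where d: "Metric_space M d" "X = Metric_space.mtopology M d"
    unfolding metrizable_space_def by blast
  then have "topspace X = M"
    by (simp add: Metric_space.topspace_mtopology)
  then have "d \<in> Met X"
    unfolding Met_def using d by simp
  then show "Met X \<noteq> {}" by blast
next
  assume "Met X \<noteq> {}"
  then obtain d where "d \<in> Met X" by blast
  then have "Metric_space (topspace X) d" "X = Metric_space.mtopology (topspace X) d"
    unfolding Met_def by simp_all
  then show "metrizable_space X"
    unfolding metrizable_space_def by blast
qed

text \<open>An infinite set without accumulation points is closed and discrete, so Tietze's theorem
  extends the map \<open>f n \<mapsto> n\<close> on it to X.\<close>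

lemma noncompact_escaping_sequence:
  assumes "metrizable_space X" "\<not> compact_space X"
  obtains f :: "nat \<Rightarrow> 'a" and g :: "'a \<Rightarrow> real"
  where "range f \<subseteq> topspace X" "continuous_map X euclidean g" "\<And>n. g (f n) = real n"
proof -
  obtain M \<rho> where \<rho>: "Metric_space M \<rho>" "X = Metric_space.mtopology M \<rho>"
    using assms(1) unfolding metrizable_space_def by blast
  interpret Metric_space M \<rho> by (fact \<rho>(1))
  have M: "topspace X = M"
    using \<rho>(2) by simp
  obtain S where S: "S \<subseteq> M" "infinite S" "X derived_set_of S = {}"
    using assms(2) unfolding \<rho>(2) compact_space_eq_Bolzano_Weierstrass by blast
  obtain f :: "nat \<Rightarrow> 'a" where f: "inj f" "range f \<subseteq> S"
    using infinite_countable_subset[OF S(2)] by blast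
  have closed_sub: "closedin X A" if "A \<subseteq> range f" for A
  proof -
    have "X derived_set_of A \<subseteq> X derived_set_of S"
      using that f(2) by (intro derived_set_of_mono) blast
    then have "X derived_set_of A = {}"
      using S(3) by simp
    then show ?thesis
      unfolding closedin_contains_derived_set using that f(2) S(1) M by blast
  qed
  have "continuous_map (subtopology X (range f)) euclidean (\<lambda>x. real (inv f x))"
    unfolding continuous_map_closedin
  proof (intro conjI allI impI)
    fix C :: "real set"
    have "{x \<in> topspace (subtopology X (range f)). real (inv f x) \<in> C} \<subseteq> range f"
      by auto
    then show "closedin (subtopology X (range f))
                 {x \<in> topspace (subtopology X (range f)). real (inv f x) \<in> C}"
      using closed_sub by (simp add: closedin_subset_topspace)
  qed simp
  moreover have "closedin X (range f)"
    by (rule closed_sub) simp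
  ultimately obtain g :: "'a \<Rightarrow> real" where g: "continuous_map X euclidean g" "\<forall>x\<in>range f. g x = real (inv f x)"
    using metrizable_imp_normal_space[OF assms(1)] unfolding normal_space_iff_Tietze by blast
  show thesis
  proof
    show "range f \<subseteq> topspace X"
      using f(2) S(1) M by blast
    show "g (f n) = real n" for n
      using g(2) f(1) by simp
  qed (fact g(1))
qed

lemma Met_plus_continuous_map:
  assumes \<rho>: "\<rho> \<in> Met X" and g: "continuous_map X euclidean g"
  shows "(\<lambda>x y. \<rho> x y + \<bar>g x - g y\<bar>) \<in> Met X"
proof -
  interpret R: Metric_space "topspace X" \<rho>
    using \<rho> by (simp add: Met_def)
  have mt: "R.mtopology = X"
    using \<rho> by (simp add: Met_def)
  define d where "d x y = \<rho> x y + \<bar>g x - g y\<bar>" for x y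
  have d: "Metric_space (topspace X) d"
  proof
    fix x y z assume "x \<in> topspace X" "y \<in> topspace X" "z \<in> topspace X"
    then show "d x z \<le> d x y + d y z"
      using R.triangle[of x y z] unfolding d_def by linarith
  next
    fix x y assume xy: "x \<in> topspace X" "y \<in> topspace X"
    show "d x y = 0 \<longleftrightarrow> x = y"
    proof
      assume "d x y = 0"
      then have "\<rho> x y = 0"
        using R.nonneg[of x y] abs_ge_zero[of "g x - g y"] unfolding d_def by linarith
      then show "x = y"
        using R.zero[OF xy] by simp
    qed (simp add: d_def xy)
  qed (auto simp: d_def R.commute)
  interpret D: Metric_space "topspace X" d by (fact d)
  have "D.mtopology = X"
  proof (rule mtopology_eq_if_balls[OF d refl])
    fix U x assume "openin X U" "x \<in> U"
    then obtain s where "0 < s" "R.mball x s \<subseteq> U"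
      using R.openin_mtopology[of U] mt by auto
    moreover have "D.mball x s \<subseteq> R.mball x s"
    proof
      fix y assume "y \<in> D.mball x s"
      then have "x \<in> topspace X" "y \<in> topspace X" "d x y < s"
        by simp_all
      moreover have "\<rho> x y < s"
        using \<open>d x y < s\<close> abs_ge_zero[of "g x - g y"] unfolding d_def by linarith
      ultimately show "y \<in> R.mball x s"
        by simp
    qed
    ultimately show "\<exists>r>0. D.mball x r \<subseteq> U"
      by blast
  next
    fix x and s :: real assume x: "x \<in> topspace X" and "0 < s"
    define W where "W = R.mball x (s/2) \<inter> {y \<in> topspace X. g y \<in> ball (g x) (s/2)}"
    have "openin X (R.mball x (s/2))"
      using R.openin_mball[of x "s/2"] unfolding mt .
    moreover have "openin X {y \<in> topspace X. g y \<in> ball (g x) (s/2)}"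
      by (rule openin_continuous_map_preimage[OF g]) simp
    ultimately have "openin X W"
      unfolding W_def by (rule openin_Int)
    moreover have "x \<in> W"
      unfolding W_def using x \<open>0 < s\<close> by simp
    moreover have "W \<subseteq> D.mball x s"
    proof
      fix y assume "y \<in> W"
      then have "y \<in> topspace X" "\<rho> x y < s/2" "\<bar>g x - g y\<bar> < s/2"
        unfolding W_def by (auto simp: dist_real_def)
      moreover have "d x y < s"
        using calculation(2,3) unfolding d_def by linarith
      ultimately show "y \<in> D.mball x s"
        using x by simp
    qed
    ultimately show "\<exists>W. openin X W \<and> x \<in> W \<and> W \<subseteq> D.mball x s"
      by blast
  qed
  then show ?thesis
    using d unfolding Met_def d_def by simp
qed

lemma not_uniformly_disconnected_near_escaping:
  assumes "inj f" "range f \<subseteq> topspace X"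
    and step: "\<And>i. d (f i) (f (Suc i)) \<le> 2" and far: "\<And>N. real N \<le> d (f 0) (f N)"
    and "DX X d e < ennreal 1"
  shows "\<not> uniformly_disconnected (topspace X) e"
proof
  assume "uniformly_disconnected (topspace X) e"
  then obtain \<delta> where "0 < \<delta>" and \<delta>: "uniformly_disconnected_with \<delta> (topspace X) e"
    unfolding uniformly_disconnected_iff_with by blast
  obtain N :: nat where N: "3 / \<delta> + 1 < real N"
    using reals_Archimedean2 by blast
  have fX: "f i \<in> topspace X" for i
    using assms(2) by blast
  have close: "\<bar>d (f i) (f j) - e (f i) (f j)\<bar> < 1" for i j
    using dist_diff_less_if_DX_less[OF assms(5) fX fX] .
  have "0 < N"
    using N \<open>0 < \<delta>\<close> by (smt (verit) divide_pos_pos of_nat_0_less_iff)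
  then have "f 0 \<noteq> f N"
    using injD[OF assms(1)] by fastforce
  then have "\<delta> * e (f 0) (f N) \<le> Max ((\<lambda>i. e (f i) (f (Suc i))) ` {..<N})"
    using \<delta> fX unfolding uniformly_disconnected_with_def by blast
  also have "\<dots> < 3"
  proof -
    have "e (f i) (f (Suc i)) < 3" for i
      using step[of i] close[of i "Suc i"] unfolding abs_less_iff by linarith
    then show ?thesis
      using \<open>0 < N\<close> by (subst Max_less_iff) auto
  qed
  finally have "\<delta> * e (f 0) (f N) < 3" .
  moreover have "real N - 1 < e (f 0) (f N)"
    using far[of N] close[of 0 N] unfolding abs_less_iff by linarith
  then have "\<delta> * (real N - 1) < \<delta> * e (f 0) (f N)"
    using \<open>0 < \<delta>\<close> by simp
  moreover have "3 < \<delta> * (real N - 1)"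
    using N \<open>0 < \<delta>\<close> by (simp add: field_simps)
  ultimately show False
    by linarith
qed

lemma noncompact_far_from_uniformly_disconnected:
  assumes "metrizable_space X" "\<not> compact_space X"
  obtains d where "d \<in> Met X" "\<And>e. DX X d e < ennreal 1 \<Longrightarrow> \<not> uniformly_disconnected (topspace X) e"
proof -
  obtain f g where f: "range f \<subseteq> topspace X" and g: "continuous_map X euclidean g"
    and gf: "\<And>n. g (f n) = real n"
    using noncompact_escaping_sequence[OF assms] by blast
  obtain \<rho> where \<rho>: "\<rho> \<in> Met X"
    using assms(1) unfolding metrizable_space_iff_Met by blast
  interpret R: Metric_space "topspace X" \<rho>
    using \<rho> by (simp add: Met_def)
  define \<rho>1 where "\<rho>1 = R.capped_dist 1"
  have \<rho>1: "\<rho>1 \<in> Met X"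
    using \<rho> R.capped_dist R.mtopology_capped_metric unfolding \<rho>1_def Met_def by simp
  have \<rho>1_bounds: "0 \<le> \<rho>1 x y" "\<rho>1 x y \<le> 1" for x y
    unfolding \<rho>1_def R.capped_dist_def by auto
  define d where "d x y = \<rho>1 x y + \<bar>g x - g y\<bar>" for x y
  show thesis
  proof
    show "d \<in> Met X"
      unfolding d_def by (rule Met_plus_continuous_map[OF \<rho>1 g])
    fix e assume "DX X d e < ennreal 1"
    moreover have "inj f"
      by (metis gf injI of_nat_eq_iff)
    moreover have "d (f i) (f (Suc i)) \<le> 2" for i
      using \<rho>1_bounds[of "f i" "f (Suc i)"] unfolding d_def gf by simp
    moreover have "real N \<le> d (f 0) (f N)" for N
      using \<rho>1_bounds[of "f 0" "f N"] unfolding d_def gf by simp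
    ultimately show "\<not> uniformly_disconnected (topspace X) e"
      using not_uniformly_disconnected_near_escaping[OF _ f] by blast
  qed
qed

lemma approximable_by_uniformly_disconnected_iff:
  assumes "metrizable_space X"
  shows "(\<forall>d\<in>Met X. \<forall>r>0. \<exists>e\<in>Met X. uniformly_disconnected (topspace X) e \<and> DX X d e < ennreal r)
         \<longleftrightarrow> covering_dim_zero X \<and> compact_space X"
proof
  assume approx: "\<forall>d\<in>Met X. \<forall>r>0. \<exists>e\<in>Met X. uniformly_disconnected (topspace X) e \<and> DX X d e < ennreal r"
  have compact: "compact_space X"
  proof (rule ccontr)
    assume "\<not> compact_space X"
    then obtain d where "d \<in> Met X"
      and far: "\<And>e. DX X d e < ennreal 1 \<Longrightarrow> \<not> uniformly_disconnected (topspace X) e"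
      using noncompact_far_from_uniformly_disconnected[OF assms] by blast
    then show False
      using approx by (meson zero_less_one)
  qed
  obtain d where "d \<in> Met X"
    using assms unfolding metrizable_space_iff_Met by blast
  then obtain e where "e \<in> Met X" "uniformly_disconnected (topspace X) e"
    using approx by (meson zero_less_one)
  then show "covering_dim_zero X \<and> compact_space X"
    using covering_dim_zero_if_uniformly_disconnected[OF compact] compact by blast
next
  assume "covering_dim_zero X \<and> compact_space X"
  then show "\<forall>d\<in>Met X. \<forall>r>0. \<exists>e\<in>Met X. uniformly_disconnected (topspace X) e \<and> DX X d e < ennreal r"
    using uniformly_disconnected_dense by blast
qed

theorem theorem1p2:
  fixes X :: "'a topology"
  assumes "metrizable_space X"
  shows "(covering_dim_zero X \<and> compact_space X) \<longleftrightarrow>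
    (Met_topology X closure_of {d \<in> Met X. uniformly_disconnected (topspace X) d}
        = topspace (Met_topology X) \<and>
     fsigma_in (Met_topology X) {d \<in> Met X. uniformly_disconnected (topspace X) d})"
proof -
  define S where "S = {d \<in> Met X. uniformly_disconnected (topspace X) d}"
  have "Met_topology X closure_of S = topspace (Met_topology X) \<longleftrightarrow>
        (\<forall>d\<in>Met X. \<forall>r>0. \<exists>e\<in>S. DX X d e < ennreal r)"
    by (rule Met_topology_dense_iff) (simp add: S_def)
  also have "\<dots> \<longleftrightarrow> covering_dim_zero X \<and> compact_space X"
    unfolding S_def using approximable_by_uniformly_disconnected_iff[OF assms] by (simp add: Bex_def)
  finally show ?thesis
    using fsigma_in_uniformly_disconnected[of X] unfolding S_def by blast
qed

end
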